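(* Let $V=V_{\widehat{\mathfrak h}}(1,0)$, $\omega=\omega_0$, and $\omega'\in\operatorname{Sc}(V,\omega)$ with $Y(\omega',z)=\sum_nL'(n)z^{-n-2}$. Identifying $V_1$ with $\mathfrak h$ via $h(-1)\mathbf 1\leftrightarrow h$, one has $\operatorname{Im}\mathcal A_{\omega'}=\operatorname{Ker}_V(L(-1)-L'(-1))\cap V_1$ and $\operatorname{Ker}\mathcal A_{\omega'}=\operatorname{Ker}_VL'(-1)\cap V_1$.
   Context: $\mathfrak h$: $d$-dimensional complex space with nondegenerate symmetric bilinear form and fixed orthonormal basis $h_1,\dots,h_d$; $V_{\widehat{\mathfrak h}}(1,0)$ the level 1 Heisenberg vertex algebra, $\omega_0=\frac12\sum_ih_i(-1)^2\mathbf 1$, $Y(\omega_0,z)=\sum_nL(n)z^{-n-2}$. For $\omega'=\sum_{i\le j}a_{ij}h_i(-1)h_j(-1)\mathbf 1+\sum_ib_ih_i(-2)\mathbf 1$, $\mathcal A_{\omega'}\in\operatorname{End}(\mathfrak h)$ has matrix the symmetric matrix with diagonal $2a_{ii}$ and off-diagonal $a_{ij}$. Semi-conformal vectors: conformal vectors $\omega'$ of vertex operator subalgebras $(U,\omega')$ with $\omega_n|_U=\omega'_n|_U$ for $n\ge 0$. *)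

theory Defs
  imports Complex_Main "HOL-Library.Poly_Mapping" "HOL-Library.Multiset" "HOL-Library.Product_Lexorder"
begin

text \<open>Level 1 Heisenberg VOA on an orthonormal basis indexed by the finite type 'i
  (d = CARD('i)).  A basis monomial of the Fock space V is a multiset M of pairs (i,k);
  the pair (i,k) stands for the creation operator h_i(-k-1), so M stands for the
  vector prod_{(i,k) in M} h_i(-k-1) 1.  V is the space of finitely supported
  complex functions on monomials (i.e. the polynomial ring in the h_i(-k-1)).\<close>

type_synonym 'i mono = "('i \<times> nat) multiset"
type_synonym 'i fock = "'i mono \<Rightarrow>\<^sub>0 complex"

definition fsmult :: "complex \<Rightarrow> 'i fock \<Rightarrow> 'i fock" where
  "fsmult c v = Poly_Mapping.map (\<lambda>x. c * x) v"

definition fbasis :: "'i mono \<Rightarrow> 'i fock" where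
  "fbasis M = Poly_Mapping.single M 1"

definition vac :: "'i fock" where
  "vac = fbasis {#}"

definition lin_ext :: "('i mono \<Rightarrow> 'i fock) \<Rightarrow> 'i fock \<Rightarrow> 'i fock" where
  "lin_ext f v = (\<Sum>M\<in>Poly_Mapping.keys v. fsmult (Poly_Mapping.lookup v M) (f M))"

text \<open>Heisenberg modes h_i(m), level 1, orthonormal basis:
  [h_i(m), h_j(n)] = m delta_ij delta_{m+n,0}; h_i(0) acts as 0 on V.\<close>
definition hmode :: "'i \<Rightarrow> int \<Rightarrow> 'i fock \<Rightarrow> 'i fock" where
  "hmode i m = lin_ext (\<lambda>M.
     if m < 0 then fbasis (add_mset (i, nat (- m - 1)) M)
     else if m = 0 then 0
     else fsmult (of_int m * of_nat (count M (i, nat (m - 1))))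
                 (fbasis (M - {#(i, nat (m - 1))#})))"

definition mwt :: "'i mono \<Rightarrow> nat" where
  "mwt M = sum_mset (image_mset (\<lambda>(i,k). k + 1) M)"

definition maxwt :: "'i fock \<Rightarrow> nat" where
  "maxwt v = Max (insert 0 (mwt ` Poly_Mapping.keys v))"

definition hprod :: "('i \<times> int) list \<Rightarrow> 'i fock \<Rightarrow> 'i fock" where
  "hprod xs = fold (\<lambda>(i,m) acc. hmode i m \<circ> acc) xs id"

text \<open>Mode v_p of the state v = h_{i1}(-k1-1)...h_{ir}(-kr-1) 1 (given as list L),
  i.e. the coefficient of z^{-p-1} in the normally ordered product
  :d^{(k1)} h_{i1}(z) ... d^{(kr)} h_{ir}(z):, where
  d^{(k)} h(z) = sum_m binom(-m-1,k) h(m) z^{-m-k-1}.  Normal ordering: the modes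
  h(m), m>=0, act first, then the creation modes h(m), m<0.  The sum is restricted to a
  box that contains all nonzero terms when applied to w.\<close>
definition modeL :: "('i \<times> nat) list \<Rightarrow> int \<Rightarrow> 'i fock \<Rightarrow> 'i fock" where
  "modeL L p w =
    (let r = length L;
         S = p + 1 - int (\<Sum>(i,k)\<leftarrow>L. k + 1);
         B = \<bar>p\<bar> + 1 + int (\<Sum>(i,k)\<leftarrow>L. k + 1) + int r * int (maxwt w)
     in \<Sum>ms\<in>{ms \<in> listset (replicate r {-B..B}). sum_list ms = S}.
          fsmult (\<Prod>(k,m)\<leftarrow>zip (map snd L) ms. ((of_int (- m - 1) :: complex) gchoose k))
            (hprod (filter (\<lambda>(i,m). m < 0) (zip (map fst L) ms))
              (hprod (filter (\<lambda>(i,m). m \<ge> 0) (zip (map fst L) ms)) w)))"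

text \<open>Vertex operator modes: Y(v,z) = sum_n v_n z^{-n-1}, so  vmode v n w = v_n w.\<close>
definition vmode :: "('i::linorder) fock \<Rightarrow> int \<Rightarrow> 'i fock \<Rightarrow> 'i fock" where
  "vmode v n w = (\<Sum>M\<in>Poly_Mapping.keys v. fsmult (Poly_Mapping.lookup v M) (modeL (sorted_list_of_multiset M) n w))"

text \<open>The standard conformal vector omega_0 = 1/2 sum_i h_i(-1)^2 1; L(n) = vmode omega0 (n+1).\<close>
definition omega0 :: "('i::finite) fock" where
  "omega0 = fsmult (1/2) (\<Sum>i\<in>UNIV. fbasis {#(i,0), (i,0)#})"

definition fsubspace :: "'i fock set \<Rightarrow> bool" where
  "fsubspace U \<longleftrightarrow> 0 \<in> U \<and> (\<forall>u\<in>U. \<forall>v\<in>U. u + v \<in> U) \<and> (\<forall>c. \<forall>u\<in>U. fsmult c u \<in> U)"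

definition fin_dim :: "'i fock set \<Rightarrow> bool" where
  "fin_dim X \<longleftrightarrow> (\<exists>B. finite B \<and> (\<forall>x\<in>X. \<exists>c. x = (\<Sum>b\<in>B. fsmult (c b) b)))"

definition vertex_subalg :: "('i::linorder) fock set \<Rightarrow> bool" where
  "vertex_subalg U \<longleftrightarrow> fsubspace U \<and> vac \<in> U \<and>
     (\<forall>u\<in>U. \<forall>v\<in>U. \<forall>n. vmode u n v \<in> U)"

definition conformal_vector_of :: "('i::linorder) fock set \<Rightarrow> 'i fock \<Rightarrow> bool" where
  "conformal_vector_of U w \<longleftrightarrow>
     w \<in> U \<and>
     (\<exists>c::complex. \<forall>m n::int. \<forall>u\<in>U.
        vmode w (m+1) (vmode w (n+1) u) - vmode w (n+1) (vmode w (m+1) u)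
        = fsmult (of_int (m - n)) (vmode w (m+n+1) u)
          + (if m + n = 0 then fsmult ((of_int m ^ 3 - of_int m) / 12 * c) u else 0)) \<and>
     (\<forall>u\<in>U. \<forall>v\<in>U. \<forall>n::int. vmode (vmode w 0 u) n v = fsmult (- of_int n) (vmode u (n - 1) v)) \<and>
     (\<forall>u\<in>U. \<exists>S::int set. \<exists>f. finite S \<and>
        (\<forall>n\<in>S. f n \<in> U \<and> vmode w 1 (f n) = fsmult (of_int n) (f n)) \<and> u = (\<Sum>n\<in>S. f n)) \<and>
     (\<forall>n::int. fin_dim {u\<in>U. vmode w 1 u = fsmult (of_int n) u}) \<and>
     (\<exists>N::int. \<forall>n<N. \<forall>u\<in>U. vmode w 1 u = fsmult (of_int n) u \<longrightarrow> u = 0)"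

definition semi_conformal :: "('i::{finite,linorder}) fock \<Rightarrow> bool" where
  "semi_conformal w \<longleftrightarrow> (\<exists>U. vertex_subalg U \<and> conformal_vector_of U w \<and>
      (\<forall>u\<in>U. \<forall>n::int. n \<ge> 0 \<longrightarrow> vmode w n u = vmode omega0 n u))"

definition V1 :: "'i fock set" where
  "V1 = {v. \<forall>M\<in>Poly_Mapping.keys v. \<exists>i. M = {#(i,0)#}}"

definition emb :: "('i::finite \<Rightarrow> complex) \<Rightarrow> 'i fock" where
  "emb x = (\<Sum>i\<in>UNIV. fsmult (x i) (fbasis {#(i,0)#}))"

text \<open>The matrix of A_{w} for w = sum_{i<=j} a_ij h_i(-1)h_j(-1)1 + sum_i b_i h_i(-2)1:
  diagonal 2 a_ii, off-diagonal a_ij (symmetric).\<close>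
definition Amat :: "'i fock \<Rightarrow> 'i \<Rightarrow> 'i \<Rightarrow> complex" where
  "Amat w i j = (if i = j then 2 * Poly_Mapping.lookup w {#(i,0), (i,0)#} else Poly_Mapping.lookup w {#(i,0), (j,0)#})"

definition Amap :: "('i::finite) fock \<Rightarrow> ('i \<Rightarrow> complex) \<Rightarrow> ('i \<Rightarrow> complex)" where
  "Amap w x = (\<lambda>i. \<Sum>j\<in>UNIV. Amat w i j * x j)"

end

theory Submission
  imports Defs
begin

text \<open>
  Write \<open>A\<close> for the matrix of \<open>\<omega>'\<close>. Semi-conformality gives \<open>L'(0)\<omega>' = L(0)\<omega>' = 2\<omega>'\<close>, so
  \<open>\<omega>' = 1/2 \<Sum>\<^sub>i\<^sub>j A\<^sub>i\<^sub>j h\<^sub>i(-1)h\<^sub>j(-1)\<one> + \<Sum>\<^sub>i b\<^sub>i h\<^sub>i(-2)\<one>\<close> has weight two. The zero mode of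
  \<open>h\<^sub>i(-2)\<one>\<close> vanishes, and a direct computation of the zero modes of the quadratic terms gives
  \<open>L'(-1) h(-1)\<one> = (A h)(-2)\<one>\<close> and \<open>L(-1) h(-1)\<one> = h(-2)\<one>\<close>. Hence on \<open>V\<^sub>1\<close> the kernel of
  \<open>L'(-1)\<close> is \<open>Ker A\<close> and that of \<open>L(-1) - L'(-1)\<close> is \<open>Ker (1 - A)\<close>. Finally,
  \<open>L'(-1)\<omega>' = L(-1)\<omega>'\<close>, and comparing the coefficients of \<open>h\<^sub>a(-2)h\<^sub>b(-1)\<one>\<close> on both sides
  yields \<open>A\<^sup>2 = A\<close>, so that \<open>Ker (1 - A) = Im A\<close>.
\<close>

abbreviation coeff :: "('a \<Rightarrow>\<^sub>0 'b::zero) \<Rightarrow> 'a \<Rightarrow> 'b" where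
  "coeff \<equiv> Poly_Mapping.lookup"

section \<open>Linear algebra of the Fock space\<close>

lemma coeff_fsmult [simp]: "coeff (fsmult c v) M = c * coeff v M"
  unfolding fsmult_def by (simp add: Poly_Mapping.map.rep_eq when_def)

lemma coeff_fbasis: "coeff (fbasis M) N = (if M = N then 1 else 0)"
  unfolding fbasis_def by (simp add: lookup_single when_def)

lemma fsmult_0_left [simp]: "fsmult 0 v = 0"
  and fsmult_0_right [simp]: "fsmult c 0 = 0"
  and fsmult_1 [simp]: "fsmult 1 v = v"
  by (rule poly_mapping_eqI; simp)+

lemma fsmult_add_right: "fsmult c (u + v) = fsmult c u + fsmult c v"
  and fsmult_add_left: "fsmult (a + b) v = fsmult a v + fsmult b v"
  and fsmult_diff_left: "fsmult (a - b) v = fsmult a v - fsmult b v"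
  and fsmult_fsmult: "fsmult a (fsmult b v) = fsmult (a * b) v"
  by (rule poly_mapping_eqI; simp add: lookup_add lookup_minus algebra_simps)+

lemma fsmult_sum_right: "fsmult c (sum f S) = (\<Sum>x\<in>S. fsmult c (f x))"
  and fsmult_sum_left: "fsmult (sum g S) v = (\<Sum>x\<in>S. fsmult (g x) v)"
  by (rule poly_mapping_eqI; simp add: lookup_sum sum_distrib_left sum_distrib_right)+

lemma keys_fsmult_subset: "Poly_Mapping.keys (fsmult c v) \<subseteq> Poly_Mapping.keys v"
  by (auto simp: in_keys_iff)

lemma coeff_sum_fbasis:
  assumes "finite S"
  shows "coeff (\<Sum>M\<in>S. fsmult (c M) (fbasis M)) N = (if N \<in> S then c N else 0)"
proof -
  have "coeff (\<Sum>M\<in>S. fsmult (c M) (fbasis M)) N = (\<Sum>M\<in>S. if M = N then c M else 0)"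
    unfolding lookup_sum by (rule sum.cong) (auto simp: coeff_fbasis)
  then show ?thesis using assms by (simp add: sum.delta')
qed

lemma fbasis_expansion: "v = (\<Sum>M\<in>Poly_Mapping.keys v. fsmult (coeff v M) (fbasis M))"
  by (rule poly_mapping_eqI) (simp add: coeff_sum_fbasis in_keys_iff)

lemma lin_ext_over:
  assumes "finite S" "Poly_Mapping.keys v \<subseteq> S"
  shows "lin_ext f v = (\<Sum>M\<in>S. fsmult (coeff v M) (f M))"
  unfolding lin_ext_def by (rule sum.mono_neutral_left[OF assms]) (auto simp: in_keys_iff)

lemma lin_ext_add: "lin_ext f (u + v) = lin_ext f u + lin_ext f v"
proof -
  let ?S = "Poly_Mapping.keys u \<union> Poly_Mapping.keys v"
  show ?thesis
    by (simp add: lin_ext_over[OF _ keys_add] lin_ext_over[of ?S u] lin_ext_over[of ?S v]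
        lookup_add fsmult_add_left sum.distrib)
qed

lemma lin_ext_fsmult: "lin_ext f (fsmult c v) = fsmult c (lin_ext f v)"
  unfolding lin_ext_over[OF finite_keys keys_fsmult_subset]
  by (simp add: lin_ext_def fsmult_sum_right fsmult_fsmult)

lemma lin_ext_zero [simp]: "lin_ext f 0 = 0"
  by (simp add: lin_ext_def)

lemma lin_ext_fbasis [simp]: "lin_ext f (fbasis M) = f M"
  by (simp add: lin_ext_over[of "{M}"] coeff_fbasis fbasis_def)

lemma lin_ext_sum: "lin_ext f (sum g S) = (\<Sum>x\<in>S. lin_ext f (g x))"
  by (induction S rule: infinite_finite_induct) (simp_all add: lin_ext_add)

section \<open>Heisenberg modes\<close>

lemma hmode_add: "hmode i m (u + v) = hmode i m u + hmode i m v"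
  and hmode_fsmult: "hmode i m (fsmult c v) = fsmult c (hmode i m v)"
  and hmode_sum: "hmode i m (sum g S) = (\<Sum>x\<in>S. hmode i m (g x))"
  unfolding hmode_def by (rule lin_ext_add lin_ext_fsmult lin_ext_sum)+

lemma hmode_zero [simp]: "hmode i m 0 = 0"
  by (simp add: hmode_def)

lemma hmode_creation: "m < 0 \<Longrightarrow> hmode i m (fbasis M) = fbasis (add_mset (i, nat (- m - 1)) M)"
  unfolding hmode_def by simp

lemma hmode_annihilation: "m > 0 \<Longrightarrow> hmode i m (fbasis M) =
   fsmult (of_int m * of_nat (count M (i, nat (m - 1)))) (fbasis (M - {#(i, nat (m - 1))#}))"
  unfolding hmode_def by simp

lemma hmode_0 [simp]: "hmode i 0 v = 0"
  unfolding hmode_def by (simp add: lin_ext_def)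

lemma hmode_vac: "m \<ge> 0 \<Longrightarrow> hmode i m vac = 0"
  by (cases "m = 0") (auto simp: vac_def hmode_annihilation)

lemma mwt_empty [simp]: "mwt {#} = 0"
  by (simp add: mwt_def)

lemma mwt_add_mset [simp]: "mwt (add_mset x M) = snd x + 1 + mwt M"
  by (cases x) (simp add: mwt_def)

lemma mwt_ge: "x \<in># M \<Longrightarrow> snd x + 1 \<le> mwt M"
  by (induction M) (auto simp: le_Suc_eq)

lemma maxwt_ge: "M \<in> Poly_Mapping.keys v \<Longrightarrow> mwt M \<le> maxwt v"
  unfolding maxwt_def by (rule Max_ge) auto

lemma maxwt_le: "(\<And>M. M \<in> Poly_Mapping.keys v \<Longrightarrow> mwt M \<le> n) \<Longrightarrow> maxwt v \<le> n"
  unfolding maxwt_def by (subst Max_le_iff) auto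

lemma maxwt_vac [simp]: "maxwt vac = 0"
  by (simp add: vac_def fbasis_def maxwt_def)

lemma hmode_above_maxwt:
  assumes "m > int (maxwt v)"
  shows "hmode i m v = 0"
proof -
  have "hmode i m v = (\<Sum>M\<in>Poly_Mapping.keys v. fsmult (coeff v M) (hmode i m (fbasis M)))"
    unfolding hmode_def by (simp only: lin_ext_def[of _ v] lin_ext_fbasis)
  also have "\<dots> = 0"
  proof (rule sum.neutral, intro ballI)
    fix M assume M: "M \<in> Poly_Mapping.keys v"
    have "(i, nat (m - 1)) \<notin># M"
      using mwt_ge[of "(i, nat (m - 1))" M] maxwt_ge[OF M] assms by auto
    then show "fsmult (coeff v M) (hmode i m (fbasis M)) = 0"
      using assms by (simp add: hmode_annihilation not_in_iff)
  qed
  finally show ?thesis .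
qed

lemma hmode_number_operator:
  "hmode i (- int k - 1) (hmode i (int k + 1) (fbasis M)) = fsmult (of_nat ((k + 1) * count M (i, k))) (fbasis M)"
proof (cases "(i, k) \<in># M")
  case True
  then have "add_mset (i, k) (M - {#(i, k)#}) = M" by simp
  then show ?thesis
    by (simp add: hmode_annihilation hmode_fsmult hmode_creation nat_add_distrib algebra_simps)
qed (simp add: hmode_annihilation not_in_iff)

lemma hprod_Nil [simp]: "hprod [] v = v"
  by (simp add: hprod_def)

lemma hprod_fold: "fold (\<lambda>(i, m) acc. hmode i m \<circ> acc) xs (g :: 'i fock \<Rightarrow> 'i fock) = hprod xs \<circ> g"
  unfolding hprod_def
proof (induction xs arbitrary: g)
  case (Cons x xs)
  obtain a b where x: "x = (a, b)" by (cases x)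
  show ?case using Cons.IH[of "hmode a b \<circ> g"] Cons.IH[of "hmode a b \<circ> id"]
    by (simp add: x comp_assoc)
qed simp

lemma hprod_Cons [simp]: "hprod (x # xs) v = hprod xs (hmode (fst x) (snd x) v)"
proof -
  have "hprod (x # xs) = fold (\<lambda>(i, m) acc. hmode i m \<circ> acc) xs (hmode (fst x) (snd x) \<circ> id)"
    unfolding hprod_def by (cases x) simp
  then show ?thesis by (simp add: hprod_fold)
qed

lemma hprod_zero [simp]: "hprod xs 0 = 0"
  by (induction xs) auto

lemma hprod_vac: "xs \<noteq> [] \<Longrightarrow> \<forall>x\<in>set xs. snd x \<ge> 0 \<Longrightarrow> hprod xs vac = 0"
  by (cases xs) (auto simp: hmode_vac)

lemma hprod_creation: "hprod (map (\<lambda>(i, k). (i, - int k - 1)) L) (fbasis M) = fbasis (M + mset L)"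
proof (induction L arbitrary: M)
  case (Cons x L)
  obtain i k where x: "x = (i, k)" by (cases x)
  have "nat (- (- int k - 1) - 1) = k" by simp
  then show ?case using Cons[of "add_mset (i, k) M"] by (simp add: x hmode_creation)
qed simp

section \<open>Modes of states\<close>

lemma vmode_over:
  assumes "finite S" "Poly_Mapping.keys u \<subseteq> S"
  shows "vmode u n v = (\<Sum>M\<in>S. fsmult (coeff u M) (modeL (sorted_list_of_multiset M) n v))"
  unfolding vmode_def by (rule sum.mono_neutral_left[OF assms]) (auto simp: in_keys_iff)

lemma vmode_add: "vmode (u1 + u2) n v = vmode u1 n v + vmode u2 n v"
proof -
  let ?S = "Poly_Mapping.keys u1 \<union> Poly_Mapping.keys u2"
  show ?thesis
    by (simp add: vmode_over[OF _ keys_add] vmode_over[of ?S u1] vmode_over[of ?S u2]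
        lookup_add fsmult_add_left sum.distrib)
qed

lemma vmode_fsmult: "vmode (fsmult c u) n v = fsmult c (vmode u n v)"
  unfolding vmode_over[OF finite_keys keys_fsmult_subset]
  by (simp add: vmode_def fsmult_sum_right fsmult_fsmult)

lemma vmode_zero_left [simp]: "vmode 0 n v = 0"
  by (simp add: vmode_def)

lemma vmode_sum: "vmode (sum g S) n v = (\<Sum>x\<in>S. vmode (g x) n v)"
  by (induction S rule: infinite_finite_induct) (simp_all add: vmode_add)

lemma vmode_fbasis: "vmode (fbasis M) n v = modeL (sorted_list_of_multiset M) n v"
  by (simp add: vmode_over[of "{M}"] coeff_fbasis fbasis_def)

definition mode_term :: "('i \<times> nat) list \<Rightarrow> int list \<Rightarrow> 'i fock \<Rightarrow> 'i fock" where
  "mode_term L ms w =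
     fsmult (\<Prod>(k, m)\<leftarrow>zip (map snd L) ms. (of_int (- m - 1) :: complex) gchoose k)
       (hprod (filter (\<lambda>(i, m). m < 0) (zip (map fst L) ms))
         (hprod (filter (\<lambda>(i, m). m \<ge> 0) (zip (map fst L) ms)) w))"

lemma listset_replicate: "ms \<in> listset (replicate r A) \<longleftrightarrow> length ms = r \<and> set ms \<subseteq> A"
proof (induction r arbitrary: ms)
  case (Suc r)
  then show ?case by (cases ms) (auto simp: set_Cons_def)
qed auto

lemma modeL_eq_sum:
  fixes L :: "('i \<times> nat) list" and p :: int and w :: "'i fock"
  defines "W \<equiv> (\<Sum>(i, k)\<leftarrow>L. k + 1)"
  defines "B \<equiv> \<bar>p\<bar> + 1 + int W + int (length L) * int (maxwt w)"
  shows "modeL L p w =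
    (\<Sum>ms | length ms = length L \<and> set ms \<subseteq> {-B..B} \<and> sum_list ms = p + 1 - int W. mode_term L ms w)"
  unfolding modeL_def Let_def mode_term_def W_def B_def listset_replicate by (simp add: conj_assoc)

lemma vmode_zero_right [simp]: "vmode u n 0 = 0"
  by (simp add: vmode_def modeL_eq_sum mode_term_def)

lemma finite_bounded_lists: "finite {ms :: int list. length ms = r \<and> set ms \<subseteq> {-B..B} \<and> P ms}"
  by (rule finite_subset[OF _ finite_lists_length_eq[of "{-B..B}" r]]) auto

lemma list_eq_if_pointwise_le_and_sum_list_eq:
  fixes xs ys :: "'a::ordered_cancel_comm_monoid_add list"
  assumes "length xs = length ys" "\<And>j. j < length ys \<Longrightarrow> xs ! j \<le> ys ! j"
    and "sum_list xs = sum_list ys"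
  shows "xs = ys"
proof (rule ccontr)
  assume "xs \<noteq> ys"
  then obtain j where j: "j < length ys" "xs ! j \<noteq> ys ! j"
    using assms(1) by (metis nth_equalityI)
  have "(\<Sum>j = 0..<length ys. xs ! j) < (\<Sum>j = 0..<length ys. ys ! j)"
    by (rule sum_strict_mono_ex1) (use assms(2) j in \<open>auto simp: order.strict_iff_order\<close>)
  with assms(1,3) show False by (simp add: sum_list_sum_nth)
qed

definition creation_modes :: "('i \<times> nat) list \<Rightarrow> int list" where
  "creation_modes L = map (\<lambda>(i, k). - int k - 1) L"

lemma length_creation_modes [simp]: "length (creation_modes L) = length L"
  by (simp add: creation_modes_def)

lemma creation_modes_nth: "j < length L \<Longrightarrow> creation_modes L ! j = - int (snd (L ! j)) - 1"
  unfolding creation_modes_def by (simp add: case_prod_beta)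

lemma sum_list_creation_modes: "sum_list (creation_modes L) = - int (\<Sum>(i, k)\<leftarrow>L. k + 1)"
  unfolding creation_modes_def by (induction L) auto

lemma mode_term_creation_modes: "mode_term L (creation_modes L) vac = fbasis (mset L)"
proof -
  have zip_fst: "zip (map fst L) (creation_modes L) = map (\<lambda>(i, k). (i, - int k - 1)) L"
    unfolding creation_modes_def by (induction L) auto
  have "(\<Prod>(k, m)\<leftarrow>zip (map snd L) (creation_modes L). (of_int (- m - 1) :: complex) gchoose k) = 1"
    unfolding creation_modes_def by (induction L) (auto simp: binomial_gbinomial[symmetric])
  moreover have "filter (\<lambda>(i, m). m \<ge> 0) (zip (map fst L) (creation_modes L)) = []"
    and "filter (\<lambda>(i, m). m < 0) (zip (map fst L) (creation_modes L)) = zip (map fst L) (creation_modes L)"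
    unfolding zip_fst by (induction L) auto
  ultimately show ?thesis
    unfolding mode_term_def by (simp add: zip_fst vac_def hprod_creation)
qed

lemma mode_term_vac_annihilated:
  assumes "length ms = length L" "j < length L" "ms ! j \<ge> 0"
  shows "mode_term L ms vac = 0"
proof -
  let ?xs = "filter (\<lambda>(i, m). m \<ge> 0) (zip (map fst L) ms)"
  have "(fst (L ! j), ms ! j) \<in> set ?xs"
    using assms by (auto simp: in_set_conv_nth intro!: exI[of _ j])
  then have "?xs \<noteq> []" by (metis empty_iff list.set(1))
  then have "hprod ?xs vac = 0" by (intro hprod_vac) auto
  then show ?thesis unfolding mode_term_def by simp
qed

lemma mode_term_binomial_vanishes:
  assumes "length ms = length L" "j < length L" "ms ! j < 0" "nat (- ms ! j - 1) < snd (L ! j)"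
  shows "mode_term L ms w = 0"
proof -
  have "(of_int (- (ms ! j) - 1) :: complex) = of_nat (nat (- ms ! j - 1))"
    using assms(3) by simp
  then have "(of_int (- (ms ! j) - 1) :: complex) gchoose (snd (L ! j)) = 0"
    using assms(4) by (simp add: binomial_gbinomial[symmetric])
  moreover have "(snd (L ! j), ms ! j) \<in> set (zip (map snd L) ms)"
    using assms(1,2) by (auto simp: in_set_conv_nth intro!: exI[of _ j])
  ultimately have "(\<Prod>(k, m)\<leftarrow>zip (map snd L) ms. (of_int (- m - 1) :: complex) gchoose k) = 0"
    by (force simp: prod_list_zero_iff)
  then show ?thesis unfolding mode_term_def by simp
qed

text \<open>Among the mode indices summed over in \<open>u\<^sub>-\<^sub>1 vac\<close>, only the creation modes survive:
  any nonnegative index annihilates the vacuum, and a negative index above the creation mode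
  gives a vanishing binomial coefficient.\<close>

lemma modeL_vac: "modeL L (-1) vac = fbasis (mset L)"
proof -
  define W where "W = (\<Sum>(i, k)\<leftarrow>L. k + 1)"
  define B where "B = 2 + int W"
  let ?S = "{ms. length ms = length L \<and> set ms \<subseteq> {-B..B} \<and> sum_list ms = - int W}"
  have sum: "modeL L (-1) vac = (\<Sum>ms\<in>?S. mode_term L ms vac)"
    unfolding modeL_eq_sum W_def B_def by simp
  have in_S: "creation_modes L \<in> ?S"
  proof -
    have "snd (L ! j) + 1 \<le> W" if "j < length L" for j
      unfolding W_def using that
      by (intro member_le_sum_list) (auto simp: in_set_conv_nth case_prod_beta intro!: exI[of _ j])
    then have "set (creation_modes L) \<subseteq> {-B..B}"
      by (fastforce simp: in_set_conv_nth creation_modes_nth B_def)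
    then show ?thesis by (simp add: sum_list_creation_modes W_def)
  qed
  have others: "mode_term L ms vac = 0" if ms: "ms \<in> ?S" "ms \<noteq> creation_modes L" for ms
  proof (cases "\<exists>j<length L. ms ! j \<ge> 0")
    case True
    then show ?thesis using ms(1) mode_term_vac_annihilated by blast
  next
    case False
    have "\<exists>j<length L. nat (- ms ! j - 1) < snd (L ! j)"
    proof (rule ccontr)
      assume "\<not> ?thesis"
      then have "ms ! j \<le> creation_modes L ! j" if "j < length L" for j
        using False that by (force simp: creation_modes_nth)
      then have "ms = creation_modes L"
        using ms(1) by (intro list_eq_if_pointwise_le_and_sum_list_eq)
          (auto simp: sum_list_creation_modes W_def)
      with ms(2) show False ..
    qed
    then show ?thesis using False ms(1) mode_term_binomial_vanishes by fastforce
  qed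
  have "(\<Sum>ms\<in>?S. mode_term L ms vac) = mode_term L (creation_modes L) vac"
    using in_S others by (subst sum.mono_neutral_right[of ?S "{creation_modes L}"])
      (auto simp: finite_bounded_lists)
  then show ?thesis unfolding sum mode_term_creation_modes .
qed

lemma vmode_vac: "vmode u (-1) vac = u"
  unfolding vmode_def modeL_vac by (simp flip: fbasis_expansion)

section \<open>The modes of \<open>h\<^sub>i(-1)h\<^sub>j(-1)\<one>\<close>, \<open>\<omega>\<^sub>0\<close> and \<open>h\<^sub>i(-2)\<one>\<close>\<close>

definition normal_pair :: "'i \<Rightarrow> 'i \<Rightarrow> int \<Rightarrow> int \<Rightarrow> 'i fock \<Rightarrow> 'i fock" where
  "normal_pair i j m n v =
     hprod (filter (\<lambda>(i, m). m < 0) [(i, m), (j, n)]) (hprod (filter (\<lambda>(i, m). m \<ge> 0) [(i, m), (j, n)]) v)"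

lemma length_2_list_obtain:
  assumes "length ms = 2"
  obtains a b where "ms = [a, b]"
  using assms by (metis (no_types, opaque_lifting) One_nat_def Suc_length_conv length_0_conv numeral_2_eq_2)

lemma modeL_pair:
  fixes i j :: "'i" and p :: int and v :: "'i fock"
  defines "B \<equiv> \<bar>p\<bar> + 3 + 2 * int (maxwt v)"
  shows "modeL [(i, 0), (j, 0)] p v = (\<Sum>m | m \<in> {-B..B} \<and> p - 1 - m \<in> {-B..B}. normal_pair i j m (p - 1 - m) v)"
proof -
  let ?I = "{m. m \<in> {-B..B} \<and> p - 1 - m \<in> {-B..B}}"
  have lists: "{ms. length ms = length [(i, 0::nat), (j, 0)] \<and> set ms \<subseteq> {-B..B} \<and> sum_list ms = p + 1 - int 2}
      = (\<lambda>m. [m, p - 1 - m]) ` ?I"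
  proof (intro equalityI subsetI)
    fix ms assume ms: "ms \<in> {ms. length ms = length [(i, 0::nat), (j, 0)] \<and> set ms \<subseteq> {-B..B} \<and> sum_list ms = p + 1 - int 2}"
    then have "length ms = 2" by simp
    then obtain a b where "ms = [a, b]" by (rule length_2_list_obtain)
    with ms show "ms \<in> (\<lambda>m. [m, p - 1 - m]) ` ?I" by (auto intro!: image_eqI[of _ _ a])
  qed auto
  have "\<bar>p\<bar> + 1 + int (\<Sum>(i, k)\<leftarrow>[(i, 0::nat), (j, 0)]. k + 1) + int (length [(i, 0::nat), (j, 0)]) * int (maxwt v) = B"
    unfolding B_def by simp
  then have "modeL [(i, 0), (j, 0)] p v = (\<Sum>ms\<in>(\<lambda>m. [m, p - 1 - m]) ` ?I. mode_term [(i, 0), (j, 0)] ms v)"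
    unfolding modeL_eq_sum lists[symmetric] by simp
  also have "\<dots> = (\<Sum>m\<in>?I. normal_pair i j m (p - 1 - m) v)"
    by (subst sum.reindex) (auto simp: inj_on_def mode_term_def normal_pair_def)
  finally show ?thesis .
qed

lemma normal_pair_vanishes:
  assumes "m + n \<le> 0" and "m > int (maxwt v) \<or> n > int (maxwt v) \<or> m = 0 \<or> n = 0"
  shows "normal_pair i j m n v = 0"
  using assms by (auto simp: normal_pair_def hmode_above_maxwt)

definition pair_mode0 :: "'i \<Rightarrow> 'i \<Rightarrow> 'i fock \<Rightarrow> 'i fock" where
  "pair_mode0 i j v = hmode j (-2) (hmode i 1 v) + hmode j (-3) (hmode i 2 v)
                    + hmode i (-2) (hmode j 1 v) + hmode i (-3) (hmode j 2 v)"

text \<open>On \<open>V\<^sub>0 \<oplus> V\<^sub>1 \<oplus> V\<^sub>2\<close> only the modes \<open>h(m)\<close>, \<open>m \<le> 2\<close>, act nontrivially, which leaves four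
  terms of the zero mode.\<close>

lemma modeL_pair_0:
  assumes "maxwt v \<le> 2"
  shows "modeL [(i, 0), (j, 0)] 0 v = pair_mode0 i j v"
proof -
  define B where "B = \<bar>0::int\<bar> + 3 + 2 * int (maxwt v)"
  let ?I = "{m. m \<in> {-B..B} \<and> 0 - 1 - m \<in> {-B..B}}"
  let ?f = "\<lambda>m. normal_pair i j m (0 - 1 - m) v"
  have "modeL [(i, 0), (j, 0)] 0 v = sum ?f ?I"
    unfolding B_def by (rule modeL_pair)
  also have "\<dots> = sum ?f {-3, -2, 1, 2}"
  proof (rule sum.mono_neutral_right)
    show "finite ?I" by (rule finite_subset[of _ "{-B..B}"]) auto
    show "{-3, -2, 1, 2} \<subseteq> ?I" unfolding B_def by auto
    have "m \<in> {-3, -2, 1, 2} \<or> m > 2 \<or> 0 - 1 - m > 2 \<or> m = 0 \<or> 0 - 1 - m = 0" for m :: int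
      by auto
    then show "\<forall>m\<in>?I - {-3, -2, 1, 2}. ?f m = 0"
      using assms by (force intro: normal_pair_vanishes)
  qed
  also have "\<dots> = pair_mode0 i j v"
    by (simp add: pair_mode0_def normal_pair_def algebra_simps)
  finally show ?thesis .
qed

text \<open>In \<open>L(0)\<close> the terms with a zero mode vanish and those with mode indices \<open>(m, -m)\<close> and
  \<open>(-m, m)\<close> coincide, hence the factor \<open>2\<close>.\<close>

lemma modeL_pair_diag_1:
  fixes v :: "'i fock"
  defines "K \<equiv> 4 + 2 * maxwt v"
  shows "modeL [(i, 0), (i, 0)] 1 v = fsmult 2 (\<Sum>k<K. hmode i (- int k - 1) (hmode i (int k + 1) v))"
proof -
  let ?I = "{m. m \<in> {- int K..int K} \<and> 1 - 1 - m \<in> {- int K..int K}}"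
  let ?f = "\<lambda>m. normal_pair i i m (1 - 1 - m) v"
  let ?g = "\<lambda>k::nat. hmode i (- int k - 1) (hmode i (int k + 1) v)"
  let ?P = "(\<lambda>k. int k + 1) ` {..<K}" and ?N = "(\<lambda>k. - int k - 1) ` {..<K}"
  have "modeL [(i, 0), (i, 0)] 1 v = sum ?f ?I"
    using modeL_pair[of i i 1 v] unfolding K_def by simp
  also have "?I = insert 0 (?P \<union> ?N)"
  proof (intro equalityI subsetI)
    fix m assume "m \<in> ?I"
    then have "m = 0 \<or> (m = int (nat (m - 1)) + 1 \<and> nat (m - 1) < K)
        \<or> (m = - int (nat (- m - 1)) - 1 \<and> nat (- m - 1) < K)"
      by auto
    then show "m \<in> insert 0 (?P \<union> ?N)" by blast
  qed auto
  also have "sum ?f (insert 0 (?P \<union> ?N)) = sum ?f ?P + sum ?f ?N"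
    by (subst sum.insert) (auto simp: normal_pair_vanishes intro!: sum.union_disjoint)
  also have "sum ?f ?P = (\<Sum>k<K. ?g k)"
    by (subst sum.reindex) (auto simp: inj_on_def normal_pair_def intro!: sum.cong)
  also have "sum ?f ?N = (\<Sum>k<K. ?g k)"
    by (subst sum.reindex) (auto simp: inj_on_def normal_pair_def add.commute intro!: sum.cong)
  finally show ?thesis
    using fsmult_add_left[of 1 1 "\<Sum>k<K. ?g k"] by simp
qed

lemma vmode_omega0:
  "vmode (omega0 :: ('i::{finite,linorder}) fock) n v = fsmult (1/2) (\<Sum>i\<in>UNIV. modeL [(i, 0), (i, 0)] n v)"
  unfolding omega0_def by (simp add: vmode_fsmult vmode_sum vmode_fbasis)

lemma mwt_as_sum:
  fixes N :: "('i::finite \<times> nat) multiset"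
  assumes "\<forall>x\<in>#N. snd x < K"
  shows "mwt N = (\<Sum>i\<in>UNIV. \<Sum>k<K. (k + 1) * count N (i, k))"
  using assms
proof (induction N)
  case (add x N)
  obtain a b where x: "x = (a, b)" by (cases x)
  have "(\<Sum>i\<in>UNIV. \<Sum>k<K. (k + 1) * count (add_mset x N) (i, k))
      = (\<Sum>i\<in>UNIV. \<Sum>k<K. (k + 1) * count N (i, k)) + (\<Sum>i\<in>UNIV. \<Sum>k<K. if i = a \<and> k = b then k + 1 else 0)"
    unfolding sum.distrib[symmetric] by (intro sum.cong) (auto simp: x)
  also have "(\<Sum>i\<in>UNIV. \<Sum>k<K. if i = a \<and> k = b then k + 1 else 0)
      = (\<Sum>i\<in>UNIV. if i = a then (\<Sum>k<K. if k = b then k + 1 else 0) else 0)"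
    by (rule sum.cong) auto
  also have "\<dots> = b + 1"
    using add.prems x by simp
  finally show ?case using add x by simp
qed simp

lemma coeff_L0: "coeff (vmode (omega0 :: ('i::{finite,linorder}) fock) 1 v) N = of_nat (mwt N) * coeff v N"
proof -
  define K where "K = 4 + 2 * maxwt v"
  have "vmode omega0 1 v = (\<Sum>i\<in>UNIV. \<Sum>k<K. hmode i (- int k - 1) (hmode i (int k + 1) v))"
    unfolding vmode_omega0 K_def modeL_pair_diag_1 by (simp add: fsmult_sum_right fsmult_fsmult)
  also have "\<dots> = (\<Sum>i\<in>UNIV. \<Sum>k<K. \<Sum>M\<in>Poly_Mapping.keys v.
                     fsmult (coeff v M * of_nat ((k + 1) * count M (i, k))) (fbasis M))"
  proof -
    have "hmode i (- int k - 1) (hmode i (int k + 1) v) = (\<Sum>M\<in>Poly_Mapping.keys v.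
        fsmult (coeff v M * of_nat ((k + 1) * count M (i, k))) (fbasis M))" for i k
      by (subst fbasis_expansion[of v])
        (simp add: hmode_sum hmode_fsmult hmode_number_operator fsmult_fsmult)
    then show ?thesis by simp
  qed
  finally have expand: "vmode omega0 1 v = \<dots>" .
  have L0: "coeff (vmode omega0 1 v) N
     = (\<Sum>i\<in>UNIV. \<Sum>k<K. if N \<in> Poly_Mapping.keys v then coeff v N * of_nat ((k + 1) * count N (i, k)) else 0)"
    unfolding expand lookup_sum[where X=UNIV] lookup_sum[where X="{..<K}"] coeff_sum_fbasis[OF finite_keys] ..
  show ?thesis
  proof (cases "N \<in> Poly_Mapping.keys v")
    case True
    have "mwt N = (\<Sum>i\<in>UNIV. \<Sum>k<K. (k + 1) * count N (i, k))"
      using mwt_ge maxwt_ge[OF True] unfolding K_def by (intro mwt_as_sum) fastforce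
    then show ?thesis unfolding L0 using True by (simp add: sum_distrib_left mult.commute)
  qed (simp add: L0 in_keys_iff)
qed

lemma modeL_single_1: "modeL [(i, 1)] 0 v = 0"
proof -
  have "mode_term [(i, 1)] ms v = 0" if "length ms = 1" "sum_list ms = -1" for ms
  proof -
    from that have "ms = [-1]" by (cases ms) auto
    then show ?thesis by (simp add: mode_term_def)
  qed
  then show ?thesis by (simp add: modeL_eq_sum)
qed

section \<open>Zero modes of weight-two vectors on \<open>V\<^sub>1\<close> and \<open>V\<^sub>2\<close>\<close>

definition hv1 :: "'i \<Rightarrow> 'i fock" where "hv1 k = fbasis {#(k, 0)#}"
definition hv2 :: "'i \<Rightarrow> 'i fock" where "hv2 k = fbasis {#(k, 1)#}"
definition hv11 :: "'i \<Rightarrow> 'i \<Rightarrow> 'i fock" where "hv11 k l = fbasis {#(k, 0), (l, 0)#}"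
definition hv21 :: "'i \<Rightarrow> 'i \<Rightarrow> 'i fock" where "hv21 k l = fbasis {#(k, 1), (l, 0)#}"

definition homogeneous :: "nat \<Rightarrow> 'i fock \<Rightarrow> bool" where
  "homogeneous n v \<longleftrightarrow> (\<forall>M\<in>Poly_Mapping.keys v. mwt M = n)"

definition quad_mode0 :: "('i::finite \<Rightarrow> 'i \<Rightarrow> complex) \<Rightarrow> 'i fock \<Rightarrow> 'i fock" where
  "quad_mode0 C v = (\<Sum>i\<in>UNIV. \<Sum>j\<in>UNIV. fsmult (C i j / 2) (pair_mode0 i j v))"

lemma pair_mode0_add: "pair_mode0 i j (u + v) = pair_mode0 i j u + pair_mode0 i j v"
  and pair_mode0_fsmult: "pair_mode0 i j (fsmult c v) = fsmult c (pair_mode0 i j v)"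
  unfolding pair_mode0_def by (simp_all add: hmode_add hmode_fsmult fsmult_add_right algebra_simps)

lemma quad_mode0_add: "quad_mode0 C (u + v) = quad_mode0 C u + quad_mode0 C v"
  unfolding quad_mode0_def by (simp add: pair_mode0_add fsmult_add_right sum.distrib)

lemma quad_mode0_fsmult: "quad_mode0 C (fsmult c v) = fsmult c (quad_mode0 C v)"
  unfolding quad_mode0_def by (simp add: pair_mode0_fsmult fsmult_sum_right fsmult_fsmult mult.commute)

lemma quad_mode0_sum: "quad_mode0 C (sum g S) = (\<Sum>x\<in>S. quad_mode0 C (g x))"
proof (induction S rule: infinite_finite_induct)
  case empty
  then show ?case using quad_mode0_fsmult[of C 0 0] by simp
qed (simp_all add: quad_mode0_add quad_mode0_fsmult[of C 0 0, simplified])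

lemma vmode_omega0_0:
  assumes "maxwt v \<le> 2"
  shows "vmode (omega0 :: ('i::{finite,linorder}) fock) 0 v = quad_mode0 (\<lambda>i j. if i = j then 1 else 0) v"
proof -
  have "vmode (omega0 :: 'i fock) 0 v = fsmult (1/2) (\<Sum>i\<in>UNIV. pair_mode0 i i v)"
    unfolding vmode_omega0 using modeL_pair_0[OF assms] by simp
  also have "\<dots> = quad_mode0 (\<lambda>i j. if i = j then 1 else 0) v"
    unfolding quad_mode0_def by (simp add: fsmult_sum_right if_distrib[of "\<lambda>c. fsmult (c / 2) _"] cong: if_cong)
  finally show ?thesis .
qed

lemma vmode_hv11_0:
  assumes "maxwt v \<le> 2"
  shows "vmode (hv11 i j) 0 v = pair_mode0 i j v"
proof -
  have "pair_mode0 i j v = pair_mode0 j i v"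
    unfolding pair_mode0_def by (simp add: algebra_simps)
  moreover have "sorted_list_of_multiset {#(i, 0::nat), (j, 0)#} \<in> {[(i, 0), (j, 0)], [(j, 0), (i, 0)]}"
    by simp
  ultimately show ?thesis
    unfolding hv11_def vmode_fbasis using modeL_pair_0[OF assms, of i j] modeL_pair_0[OF assms, of j i] by auto
qed

lemma vmode_hv2_0: "vmode (hv2 i) 0 v = 0"
  unfolding hv2_def vmode_fbasis sorted_list_of_multiset_singleton by (rule modeL_single_1)

lemma mwt_eq_0_iff [simp]: "mwt N = 0 \<longleftrightarrow> N = {#}"
  by (cases N) auto

lemma mwt_eq_1:
  assumes "mwt N = 1"
  shows "\<exists>a. N = {#(a, 0)#}"
proof (cases N)
  case (add x N')
  with assms show ?thesis by (cases x) auto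
qed (use assms in simp)

lemma mwt_eq_2:
  assumes "mwt N = 2"
  shows "(\<exists>a b. N = {#(a, 0), (b, 0)#}) \<or> (\<exists>a. N = {#(a, 1)#})"
proof (cases N)
  case (add x N')
  obtain a k where x: "x = (a, k)" by (cases x)
  from assms add x have "k + mwt N' = 1" by simp
  then consider "k = 0" "mwt N' = 1" | "k = 1" "N' = {#}"
    by (cases k) auto
  then show ?thesis
    using mwt_eq_1[of N'] add x by cases auto
qed (use assms in simp)

lemma Amat_sym: "Amat w i j = Amat w j i"
  unfolding Amat_def by (simp add: add_mset_commute)

lemma pair_mset_eq_iff:
  "{#(i, 0::nat), (j, 0)#} = {#(a, 0), (b, 0)#} \<longleftrightarrow> (i = a \<and> j = b) \<or> (i = b \<and> j = a)"
  by (auto simp: add_eq_conv_ex)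

lemma sum_pair_mset_delta:
  fixes c :: "'i::finite \<Rightarrow> 'i \<Rightarrow> complex"
  shows "(\<Sum>i\<in>UNIV. \<Sum>j\<in>UNIV. if {#(i, 0::nat), (j, 0)#} = {#(a, 0), (b, 0)#} then c i j else 0)
       = (if a = b then c a a else c a b + c b a)"
proof (cases "a = b")
  case True
  have "(\<Sum>i\<in>UNIV. \<Sum>j\<in>UNIV. if {#(i, 0::nat), (j, 0)#} = {#(a, 0), (b, 0)#} then c i j else 0)
      = (\<Sum>i\<in>UNIV. if i = a then (\<Sum>j\<in>UNIV. if j = a then c i j else 0) else 0)"
    using True by (intro sum.cong refl) (auto simp: pair_mset_eq_iff)
  then show ?thesis using True by simp
next
  case False
  have "(\<Sum>i\<in>UNIV. \<Sum>j\<in>UNIV. if {#(i, 0::nat), (j, 0)#} = {#(a, 0), (b, 0)#} then c i j else 0)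
      = (\<Sum>i\<in>UNIV. (if i = a then (\<Sum>j\<in>UNIV. if j = b then c i j else 0) else 0)
                   + (if i = b then (\<Sum>j\<in>UNIV. if j = a then c i j else 0) else 0))"
    using False by (intro sum.cong refl) (auto simp: pair_mset_eq_iff sum.distrib[symmetric] intro!: sum.cong)
  then show ?thesis using False by (simp add: sum.distrib)
qed

text \<open>The factor \<open>1/2\<close> compensates for \<open>Amat\<close> doubling the diagonal and listing each
  off-diagonal coefficient twice.\<close>

lemma homogeneous_2_decomposition:
  fixes w :: "('i::finite) fock"
  assumes "homogeneous 2 w"
  shows "w = (\<Sum>i\<in>UNIV. \<Sum>j\<in>UNIV. fsmult (Amat w i j / 2) (hv11 i j))
           + (\<Sum>i\<in>UNIV. fsmult (coeff w {#(i, 1)#}) (hv2 i))"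
    (is "w = ?R")
proof (rule poly_mapping_eqI)
  fix N
  have R: "coeff ?R N = (\<Sum>i\<in>UNIV. \<Sum>j\<in>UNIV. if {#(i, 0), (j, 0)#} = N then Amat w i j / 2 else 0)
       + (\<Sum>i\<in>UNIV. if {#(i, 1)#} = N then coeff w {#(i, 1)#} else 0)"
    by (simp add: lookup_add lookup_sum hv11_def hv2_def coeff_fbasis if_distrib[of "\<lambda>x. _ * x"] cong: if_cong)
  show "coeff w N = coeff ?R N"
  proof (cases "mwt N = 2")
    case True
    then consider a b where "N = {#(a, 0), (b, 0)#}" | a where "N = {#(a, 1)#}"
      using mwt_eq_2 by blast
    then show ?thesis
    proof cases
      case 1
      have "(\<Sum>i\<in>UNIV. if {#(i, 1::nat)#} = N then coeff w {#(i, 1)#} else 0) = 0"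
        using 1 by (intro sum.neutral) auto
      with 1 show ?thesis
        unfolding R by (simp add: sum_pair_mset_delta Amat_def add_mset_commute)
    next
      case 2
      have "(\<Sum>i\<in>UNIV. \<Sum>j\<in>UNIV. if {#(i, 0::nat), (j, 0)#} = N then Amat w i j / 2 else 0) = 0"
        using 2 by (intro sum.neutral) auto
      with 2 show ?thesis unfolding R by simp
    qed
  next
    case False
    then have "coeff w N = 0"
      using assms by (auto simp: homogeneous_def in_keys_iff)
    moreover have "(\<Sum>i\<in>UNIV. \<Sum>j\<in>UNIV. if {#(i, 0::nat), (j, 0)#} = N then Amat w i j / 2 else 0) = 0"
      and "(\<Sum>i\<in>UNIV. if {#(i, 1::nat)#} = N then coeff w {#(i, 1)#} else 0) = 0"
      using False by (auto intro!: sum.neutral)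
    ultimately show ?thesis unfolding R by simp
  qed
qed

lemma maxwt_homogeneous: "homogeneous n v \<Longrightarrow> maxwt v \<le> n"
  unfolding homogeneous_def by (rule maxwt_le) simp

lemma vmode_homogeneous_2_0:
  fixes w :: "('i::{finite,linorder}) fock"
  assumes "homogeneous 2 w" and "maxwt v \<le> 2"
  shows "vmode w 0 v = quad_mode0 (Amat w) v"
  by (subst homogeneous_2_decomposition[OF assms(1)])
    (simp add: quad_mode0_def vmode_add vmode_sum vmode_fsmult vmode_hv11_0[OF assms(2)] vmode_hv2_0)

lemma pair_mode0_hv1: "pair_mode0 i j (hv1 k) = (if i = k then hv2 j else 0) + (if j = k then hv2 i else 0)"
  unfolding pair_mode0_def hv1_def hv2_def by (simp add: hmode_annihilation hmode_creation vac_def)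

lemma pair_mode0_hv11:
  "pair_mode0 i j (hv11 k l) = (if i = k then hv21 j l else 0) + (if i = l then hv21 j k else 0)
                             + ((if j = k then hv21 i l else 0) + (if j = l then hv21 i k else 0))"
proof -
  have h1: "hmode i 1 (hv11 k l) = (if i = k then hv1 l else 0) + (if i = l then hv1 k else 0)" for i
    by (cases "i = k"; cases "i = l")
      (auto simp: hv11_def hv1_def hmode_annihilation add_mset_commute fsmult_add_left[of 1 1, simplified])
  have h2: "hmode i 2 (hv11 k l) = 0" for i
    unfolding hv11_def by (simp add: hmode_annihilation)
  have create: "hmode j (-2) (hv1 l) = hv21 j l" for j l
    unfolding hv1_def hv21_def by (simp add: hmode_creation)
  show ?thesis
    unfolding pair_mode0_def h1 h2 by (simp add: hmode_add create algebra_simps)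
qed

lemma coeff_pair_mode0_hv2: "coeff (pair_mode0 i j (hv2 k)) {#(a, 1), (b, 0)#} = 0"
proof -
  have "hmode i 1 (hv2 k) = 0" for i
    unfolding hv2_def by (simp add: hmode_annihilation)
  moreover have "hmode i 2 (hv2 k) = (if i = k then fsmult 2 vac else 0)" for i
    unfolding hv2_def vac_def by (simp add: hmode_annihilation)
  moreover have "coeff (hmode i (-3) vac) {#(a, 1), (b, 0)#} = 0" for i
    unfolding vac_def by (simp add: hmode_creation coeff_fbasis)
  ultimately show ?thesis unfolding pair_mode0_def by (simp add: lookup_add hmode_fsmult)
qed

lemma sum_sum_if_fst_eq: "(\<Sum>i\<in>UNIV. \<Sum>j\<in>UNIV. if i = k then fsmult (c i j) (f j) else 0) = (\<Sum>j\<in>UNIV. fsmult (c k j) (f j))"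
  and sum_sum_if_snd_eq: "(\<Sum>i\<in>UNIV. \<Sum>j\<in>UNIV. if j = k then fsmult (c i j) (f i) else 0) = (\<Sum>i\<in>UNIV. fsmult (c i k) (f i))"
  for c :: "'i::finite \<Rightarrow> 'i \<Rightarrow> complex"
  by (simp_all add: sum.swap[of _ UNIV UNIV])

lemma quad_mode0_hv1:
  assumes "\<And>i j. C i j = C j i"
  shows "quad_mode0 C (hv1 k) = (\<Sum>j\<in>UNIV. fsmult (C k j) (hv2 j))"
proof -
  have "quad_mode0 C (hv1 k) = (\<Sum>i\<in>UNIV. \<Sum>j\<in>UNIV. if i = k then fsmult (C i j / 2) (hv2 j) else 0)
                    + (\<Sum>i\<in>UNIV. \<Sum>j\<in>UNIV. if j = k then fsmult (C i j / 2) (hv2 i) else 0)"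
    unfolding quad_mode0_def pair_mode0_hv1 by (simp add: fsmult_add_right sum.distrib if_distrib[of "fsmult _"] cong: if_cong)
  also have "\<dots> = (\<Sum>j\<in>UNIV. fsmult (C k j) (hv2 j))"
    unfolding sum_sum_if_fst_eq sum_sum_if_snd_eq assms[of _ k]
    by (simp add: sum.distrib[symmetric] fsmult_add_left[symmetric])
  finally show ?thesis .
qed

lemma quad_mode0_hv11:
  assumes "\<And>i j. C i j = C j i"
  shows "quad_mode0 C (hv11 k l) = (\<Sum>j\<in>UNIV. fsmult (C k j) (hv21 j l)) + (\<Sum>j\<in>UNIV. fsmult (C l j) (hv21 j k))"
proof -
  have "quad_mode0 C (hv11 k l) =
      ((\<Sum>i\<in>UNIV. \<Sum>j\<in>UNIV. if i = k then fsmult (C i j / 2) (hv21 j l) else 0)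
      + (\<Sum>i\<in>UNIV. \<Sum>j\<in>UNIV. if i = l then fsmult (C i j / 2) (hv21 j k) else 0))
      + ((\<Sum>i\<in>UNIV. \<Sum>j\<in>UNIV. if j = k then fsmult (C i j / 2) (hv21 i l) else 0)
      + (\<Sum>i\<in>UNIV. \<Sum>j\<in>UNIV. if j = l then fsmult (C i j / 2) (hv21 i k) else 0))"
    unfolding quad_mode0_def pair_mode0_hv11
    by (simp add: fsmult_add_right sum.distrib if_distrib[of "fsmult _"] cong: if_cong)
  also have "\<dots> = (\<Sum>j\<in>UNIV. fsmult (C k j) (hv21 j l)) + (\<Sum>j\<in>UNIV. fsmult (C l j) (hv21 j k))"
    unfolding sum_sum_if_fst_eq sum_sum_if_snd_eq assms[of _ k] assms[of _ l]
    by (simp add: sum.distrib[symmetric] fsmult_add_left[symmetric] algebra_simps)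
  finally show ?thesis .
qed

lemma coeff_hv21: "coeff (hv21 j l) {#(a, 1), (b, 0)#} = (if j = a \<and> l = b then 1 else 0)"
  unfolding hv21_def coeff_fbasis by (auto simp: add_eq_conv_ex)

lemma coeff_quad_mode0_hv11:
  assumes "\<And>i j. C i j = C j i"
  shows "coeff (quad_mode0 C (hv11 k l)) {#(a, 1), (b, 0)#} = (if l = b then C k a else 0) + (if k = b then C l a else 0)"
  unfolding quad_mode0_hv11[OF assms] lookup_add lookup_sum coeff_fsmult coeff_hv21
  by (simp add: if_distrib[of "(*) _"] cong: if_cong)

lemma coeff_quad_mode0_hv2: "coeff (quad_mode0 C (hv2 k)) {#(a, 1), (b, 0)#} = 0"
  unfolding quad_mode0_def lookup_sum coeff_fsmult coeff_pair_mode0_hv2 by simp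

lemma coeff_quad_mode0_homogeneous_2:
  fixes w :: "('i::finite) fock"
  assumes "homogeneous 2 w" and "\<And>i j. C i j = C j i"
  shows "coeff (quad_mode0 C w) {#(a, 1), (b, 0)#} = (\<Sum>k\<in>UNIV. Amat w b k * C k a)"
proof -
  have "coeff (quad_mode0 C w) {#(a, 1), (b, 0)#}
      = (\<Sum>i\<in>UNIV. \<Sum>j\<in>UNIV. Amat w i j / 2 * coeff (quad_mode0 C (hv11 i j)) {#(a, 1), (b, 0)#})
        + (\<Sum>i\<in>UNIV. coeff w {#(i, 1)#} * coeff (quad_mode0 C (hv2 i)) {#(a, 1), (b, 0)#})"
    by (subst homogeneous_2_decomposition[OF assms(1)])
      (simp add: quad_mode0_add quad_mode0_sum quad_mode0_fsmult lookup_add lookup_sum)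
  also have "\<dots> = (\<Sum>i\<in>UNIV. \<Sum>j\<in>UNIV. Amat w i j / 2 * ((if j = b then C i a else 0) + (if i = b then C j a else 0)))"
    unfolding coeff_quad_mode0_hv11[OF assms(2)] coeff_quad_mode0_hv2 by simp
  also have "\<dots> = (\<Sum>i\<in>UNIV. Amat w i b / 2 * C i a) + (\<Sum>j\<in>UNIV. Amat w b j / 2 * C j a)"
    by (simp add: distrib_left sum.distrib if_distrib[of "\<lambda>z. _ * z"] sum.swap[of _ UNIV UNIV] cong: if_cong)
  also have "\<dots> = (\<Sum>k\<in>UNIV. Amat w b k * C k a)"
    by (simp add: Amat_sym[of w _ b] sum.distrib[symmetric] field_simps)
  finally show ?thesis .
qed

lemma quad_mode0_emb:
  assumes "\<And>i j. C i j = C j i"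
  shows "quad_mode0 C (emb x) = (\<Sum>j\<in>UNIV. fsmult (\<Sum>k\<in>UNIV. C k j * x k) (hv2 j))"
proof -
  have "quad_mode0 C (emb x) = (\<Sum>k\<in>UNIV. \<Sum>j\<in>UNIV. fsmult (C k j * x k) (hv2 j))"
    unfolding emb_def quad_mode0_sum quad_mode0_fsmult hv1_def[symmetric] quad_mode0_hv1[OF assms]
    by (simp add: fsmult_sum_right fsmult_fsmult mult.commute)
  also have "\<dots> = (\<Sum>j\<in>UNIV. fsmult (\<Sum>k\<in>UNIV. C k j * x k) (hv2 j))"
    by (subst sum.swap) (simp add: fsmult_sum_left)
  finally show ?thesis .
qed

section \<open>The weight-one space\<close>

lemma keys_emb: "Poly_Mapping.keys (emb x) \<subseteq> range (\<lambda>k. {#(k, 0)#})"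
proof -
  have "Poly_Mapping.keys (emb x) \<subseteq> (\<Union>k. Poly_Mapping.keys (fsmult (x k) (fbasis {#(k, 0)#})))"
    unfolding emb_def by (rule keys_sum)
  also have "\<dots> \<subseteq> range (\<lambda>k. {#(k, 0)#})"
    using keys_fsmult_subset by (fastforce simp: fbasis_def)
  finally show ?thesis .
qed

lemma maxwt_emb: "maxwt (emb x) \<le> 2"
  by (rule maxwt_le) (use keys_emb in fastforce)

lemma coeff_emb: "coeff (emb x) {#(k, 0)#} = x k"
  unfolding emb_def by (simp add: lookup_sum coeff_fbasis if_distrib[of "(*) _"] cong: if_cong)

lemma V1_eq_range_emb: "V1 = range (emb :: ('i::finite \<Rightarrow> complex) \<Rightarrow> 'i fock)"
proof (intro equalityI subsetI)
  fix v :: "'i fock" assume v: "v \<in> V1"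
  have "v = emb (\<lambda>k. coeff v {#(k, 0)#})"
  proof (rule poly_mapping_eqI)
    fix N
    show "coeff v N = coeff (emb (\<lambda>k. coeff v {#(k, 0)#})) N"
    proof (cases "N \<in> Poly_Mapping.keys v")
      case True
      then obtain k where "N = {#(k, 0)#}" using v unfolding V1_def by blast
      then show ?thesis by (simp add: coeff_emb)
    next
      case False
      then show ?thesis
        unfolding emb_def lookup_sum by (auto simp: coeff_fbasis in_keys_iff intro!: sum.neutral)
    qed
  qed
  then show "v \<in> range emb" by blast
qed (use keys_emb in \<open>auto simp: V1_def\<close>)

lemma sum_hv2_eq_0_iff: "(\<Sum>j\<in>UNIV. fsmult (c j) (hv2 (j :: 'i::finite))) = 0 \<longleftrightarrow> (\<forall>j. c j = 0)"
proof
  assume "(\<Sum>j\<in>UNIV. fsmult (c j) (hv2 j)) = 0"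
  moreover have "coeff (\<Sum>j\<in>UNIV. fsmult (c j) (hv2 j)) {#(a, 1)#} = c a" for a
    unfolding hv2_def lookup_sum by (simp add: coeff_fbasis if_distrib[of "(*) _"] cong: if_cong)
  ultimately show "\<forall>j. c j = 0" by simp
qed simp

lemma vmode_homogeneous_2_emb_0:
  fixes w :: "('i::{finite,linorder}) fock"
  assumes "homogeneous 2 w"
  shows "vmode w 0 (emb x) = (\<Sum>j\<in>UNIV. fsmult (Amap w x j) (hv2 j))"
  unfolding vmode_homogeneous_2_0[OF assms maxwt_emb] quad_mode0_emb[OF Amat_sym] Amap_def
  by (simp add: Amat_sym)

lemma vmode_omega0_emb_0: "vmode omega0 0 (emb x) = (\<Sum>j\<in>UNIV. fsmult (x j) (hv2 j))"
  unfolding vmode_omega0_0[OF maxwt_emb] by (subst quad_mode0_emb) (auto simp: if_distrib[of "\<lambda>z. z * _"] cong: if_cong)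

section \<open>Semi-conformal vectors\<close>

text \<open>The Virasoro relation \<open>[L'(0), L'(-2)] = 2L'(-2)\<close> applied to the vacuum gives
  \<open>L'(0)\<omega>' = 2\<omega>'\<close>, and \<open>L'(0) = L(0)\<close> on the subalgebra.\<close>

lemma semi_conformal_L0:
  assumes "semi_conformal w"
  shows "vmode omega0 1 w = fsmult 2 w"
proof -
  from assms obtain U where sub: "vertex_subalg U" and cv: "conformal_vector_of U w"
    and agree: "\<And>u n. u \<in> U \<Longrightarrow> n \<ge> 0 \<Longrightarrow> vmode w n u = vmode omega0 n u"
    unfolding semi_conformal_def by blast
  have "\<exists>c::complex. \<forall>m n::int. \<forall>u\<in>U.
        vmode w (m+1) (vmode w (n+1) u) - vmode w (n+1) (vmode w (m+1) u)
        = fsmult (of_int (m - n)) (vmode w (m+n+1) u)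
          + (if m + n = 0 then fsmult ((of_int m ^ 3 - of_int m) / 12 * c) u else 0)"
    using cv unfolding conformal_vector_of_def by (rule conjunct1[OF conjunct2])
  then obtain c :: complex where vir: "\<And>m n u. u \<in> U \<Longrightarrow>
        vmode w (m+1) (vmode w (n+1) u) - vmode w (n+1) (vmode w (m+1) u)
        = fsmult (of_int (m - n)) (vmode w (m+n+1) u)
          + (if m + n = 0 then fsmult ((of_int m ^ 3 - of_int m) / 12 * c) u else 0)"
    by blast
  have "w \<in> U" "vac \<in> U"
    using cv sub unfolding conformal_vector_of_def vertex_subalg_def by blast+
  have "vmode (omega0 :: 'a fock) 1 vac = 0"
    by (rule poly_mapping_eqI) (simp add: coeff_L0 vac_def coeff_fbasis)
  then have "vmode w 1 w = fsmult 2 w"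
    using vir[OF \<open>vac \<in> U\<close>, of 0 "-2"] agree[OF \<open>vac \<in> U\<close>, of 1] by (simp add: vmode_vac)
  then show ?thesis using agree[OF \<open>w \<in> U\<close>, of 1] by simp
qed

lemma semi_conformal_homogeneous_2:
  assumes "semi_conformal w"
  shows "homogeneous 2 w"
  unfolding homogeneous_def
proof
  fix N assume "N \<in> Poly_Mapping.keys w"
  then have "coeff w N \<noteq> 0" by (simp add: in_keys_iff)
  moreover have "of_nat (mwt N) * coeff w N = 2 * coeff w N"
    using arg_cong[OF semi_conformal_L0[OF assms], of "\<lambda>v. coeff v N"] by (simp add: coeff_L0)
  ultimately have "(of_nat (mwt N) :: complex) = of_nat 2" by simp
  then show "mwt N = 2" by (simp only: of_nat_eq_iff)
qed

lemma semi_conformal_Amat_idempotent: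
  assumes "semi_conformal w"
  shows "(\<Sum>k\<in>UNIV. Amat w b k * Amat w k a) = Amat w b a"
proof -
  have hom: "homogeneous 2 w"
    using assms by (rule semi_conformal_homogeneous_2)
  have "maxwt w \<le> 2"
    using hom by (rule maxwt_homogeneous)
  from assms obtain U where cv: "conformal_vector_of U w"
    and agree: "\<And>u n. u \<in> U \<Longrightarrow> n \<ge> 0 \<Longrightarrow> vmode w n u = vmode omega0 n u"
    unfolding semi_conformal_def by blast
  have "w \<in> U"
    using cv unfolding conformal_vector_of_def by blast
  then have "vmode w 0 w = vmode omega0 0 w" by (simp add: agree)
  then have "quad_mode0 (Amat w) w = quad_mode0 (\<lambda>i j. if i = j then 1 else 0) w"
    unfolding vmode_homogeneous_2_0[OF hom \<open>maxwt w \<le> 2\<close>] vmode_omega0_0[OF \<open>maxwt w \<le> 2\<close>] .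
  then have "coeff (quad_mode0 (Amat w) w) {#(a, 1), (b, 0)#}
      = coeff (quad_mode0 (\<lambda>i j. if i = j then 1 else 0) w) {#(a, 1), (b, 0)#}"
    by (rule arg_cong)
  moreover have "coeff (quad_mode0 (\<lambda>i j. if i = j then 1 else 0) w) {#(a, 1), (b, 0)#} = Amat w b a"
    by (subst coeff_quad_mode0_homogeneous_2[OF hom]) (auto simp: if_distrib[of "(*) _"] cong: if_cong)
  ultimately show ?thesis
    unfolding coeff_quad_mode0_homogeneous_2[OF hom Amat_sym] by simp
qed

lemma semi_conformal_Amap_idempotent:
  assumes "semi_conformal w"
  shows "Amap w (Amap w x) = Amap w x"
proof
  fix i
  have "Amap w (Amap w x) i = (\<Sum>j\<in>UNIV. \<Sum>k\<in>UNIV. Amat w i j * Amat w j k * x k)"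
    unfolding Amap_def by (simp add: sum_distrib_left mult.assoc)
  also have "\<dots> = (\<Sum>k\<in>UNIV. (\<Sum>j\<in>UNIV. Amat w i j * Amat w j k) * x k)"
    by (subst sum.swap) (simp add: sum_distrib_right)
  finally show "Amap w (Amap w x) i = Amap w x i"
    unfolding semi_conformal_Amat_idempotent[OF assms] Amap_def .
qed

lemma idempotent_range_eq_fixpoints:
  assumes "\<And>x. f (f x) = f x"
  shows "range f = {x. f x = x}"
proof (intro equalityI subsetI)
  fix x assume "x \<in> {x. f x = x}"
  then have "x = f x" by simp
  then show "x \<in> range f" by (rule range_eqI)
qed (use assms in auto)

lemma V1_filter_eq_image_emb: "{v \<in> V1. P v} = emb ` {x. P (emb x)}"
  unfolding V1_eq_range_emb by auto

theorem proposition4p1: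
  fixes w :: "('i::{finite,linorder}) fock"
  assumes "semi_conformal w"
  shows "emb ` range (Amap w) = {v \<in> V1. vmode omega0 0 v - vmode w 0 v = 0}
         \<and> emb ` {x. Amap w x = (\<lambda>_. 0)} = {v \<in> V1. vmode w 0 v = 0}"
proof -
  have L'_emb: "vmode w 0 (emb x) = (\<Sum>j\<in>UNIV. fsmult (Amap w x j) (hv2 j))" for x
    using semi_conformal_homogeneous_2[OF assms] by (rule vmode_homogeneous_2_emb_0)
  have L_minus_L'_emb: "vmode omega0 0 (emb x) - vmode w 0 (emb x) = (\<Sum>j\<in>UNIV. fsmult (x j - Amap w x j) (hv2 j))" for x
    unfolding L'_emb vmode_omega0_emb_0 by (simp add: fsmult_diff_left sum_subtractf)
  have "vmode omega0 0 (emb x) - vmode w 0 (emb x) = 0 \<longleftrightarrow> Amap w x = x" for x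
    unfolding L_minus_L'_emb sum_hv2_eq_0_iff by (auto simp: fun_eq_iff)
  moreover have "vmode w 0 (emb x) = 0 \<longleftrightarrow> Amap w x = (\<lambda>_. 0)" for x
    unfolding L'_emb sum_hv2_eq_0_iff by (simp add: fun_eq_iff)
  moreover have "range (Amap w) = {x. Amap w x = x}"
    using semi_conformal_Amap_idempotent[OF assms] by (rule idempotent_range_eq_fixpoints)
  ultimately show ?thesis
    unfolding V1_filter_eq_image_emb by simp
qed
end
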